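(* Let $T$ be a locally finite, infinite tree with root $o$ in which every vertex has forward degree at least $2$, let $\phi$ be an ultrametric element on $T$, let $\mu$ be a Borel probability measure on $\partial T$ with $\operatorname{supp}(\mu) = \partial T$, and let $\sigma$ be a probability measure on $[0,\infty)$ whose distribution function $F_\sigma(r) = \sigma([0,r))$ satisfies $F_\sigma(0+) = 0$, $F_\sigma(\phi(o)) < 1$, and $F_\sigma$ is strictly increasing on each set $\Lambda_\phi(\xi) = \{\phi(x) : x \in \pi(o,\xi)\}$, $\xi \in \partial T$. Then there is an ultrametric element $\phi_*$ on $T$ such that the $(\phi,\mu,\sigma)$-process coincides with the standard process associated with $\mu$ and $\phi_*$, i.e. for every $t>0$ the operators $P^t$ defined from $(\phi,\mu,\sigma)$ and from $(\phi_*,\mu,\sigma_* )$ coincide.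
   Context: $T$ is identified with its vertex set; for $x\neq o$, $x^-$ is the neighbour of $x$ on the geodesic from $o$ to $x$, and the forward degree of $x$ is $|\{y : y^-=x\}|$. $\partial T$ is the set of ends (equivalence classes of geodesic rays, two rays being equivalent if their symmetric difference is finite); $\pi(o,\xi)$ is the ray from $o$ representing $\xi$. For distinct $\xi,\eta\in\partial T$, $\xi\wedge\eta$ is the last common vertex of $\pi(o,\xi)$ and $\pi(o,\eta)$. An ultrametric element is $\phi : T \to (0,\infty)$ with $\phi(x^-) > \phi(x)$ for all $x \neq o$ and $\phi(x_n)\to 0$ along every geodesic ray $[x_0,x_1,\dots]$; it induces the ultrametric $d_\phi(\xi,\eta) = \phi(\xi\wedge\eta)$ ($\xi\neq\eta$), $d_\phi(\xi,\xi)=0$, on $\partial T$, with closed balls $B_\phi(\xi,r) = \{\eta : d_\phi(\xi,\eta)\le r\}$. Given $(\phi,\mu,\sigma)$ as in the claim, for $r>0$ and $f\in L^2(\partial T,\mu)$ put $P_r f(\xi) = \mu(B_\phi(\xi,r))^{-1}\int_{B_\phi(\xi,r)} f\,d\mu$, and for $t>0$ let $\sigma^t$ be the probability measure on $[0,\infty)$ with distribution function $F_{\sigma^t}(r) = F_\sigma(r)^t$; then $P^t f(\xi) = \int_{[0,\infty)} P_r f(\xi)\,d\sigma^t(r)$. This is a Feller Markov semigroup; the associated Hunt process on $\partial T$ is called the $(\phi,\mu,\sigma)$-process. The standard process associated with $\mu$ and an ultrametric element $\phi$ is the $(\phi,\mu,\sigma_* )$-process, where $\sigma_*$ is the inverse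 exponential distribution, $\sigma_*([0,r)) = e^{-1/r}$ for $r>0$. *)

theory Defs
  imports "HOL-Probability.Probability"
begin

text \<open>Rooted tree on the vertex type 'v: root rt, parent map par (x^- = par x for x \<noteq> rt).\<close>

definition children :: "('v \<Rightarrow> 'v) \<Rightarrow> 'v \<Rightarrow> 'v \<Rightarrow> 'v set" where
  "children par rt x = {y. y \<noteq> rt \<and> par y = x}"

definition rooted_tree :: "('v \<Rightarrow> 'v) \<Rightarrow> 'v \<Rightarrow> bool" where
  "rooted_tree par rt \<longleftrightarrow> (\<forall>x. \<exists>n. (par ^^ n) x = rt)"

definition locally_finite_tree :: "('v \<Rightarrow> 'v) \<Rightarrow> 'v \<Rightarrow> bool" where
  "locally_finite_tree par rt \<longleftrightarrow> (\<forall>x. finite (children par rt x))"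

definition forward_degree :: "('v \<Rightarrow> 'v) \<Rightarrow> 'v \<Rightarrow> 'v \<Rightarrow> nat" where
  "forward_degree par rt x = card (children par rt x)"

definition adjacent :: "('v \<Rightarrow> 'v) \<Rightarrow> 'v \<Rightarrow> 'v \<Rightarrow> 'v \<Rightarrow> bool" where
  "adjacent par rt x y \<longleftrightarrow> (y \<noteq> rt \<and> par y = x) \<or> (x \<noteq> rt \<and> par x = y)"

definition geodesic_ray :: "('v \<Rightarrow> 'v) \<Rightarrow> 'v \<Rightarrow> (nat \<Rightarrow> 'v) \<Rightarrow> bool" where
  "geodesic_ray par rt xs \<longleftrightarrow>
     (\<forall>n. adjacent par rt (xs n) (xs (Suc n))) \<and> (\<forall>n. xs (Suc (Suc n)) \<noteq> xs n)"

text \<open>The boundary: each end \<xi> is represented by its ray \<pi>(o,\<xi>) from the root.\<close>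
definition boundary :: "('v \<Rightarrow> 'v) \<Rightarrow> 'v \<Rightarrow> (nat \<Rightarrow> 'v) set" where
  "boundary par rt = {\<xi>. \<xi> 0 = rt \<and> (\<forall>n. \<xi> (Suc n) \<noteq> rt \<and> par (\<xi> (Suc n)) = \<xi> n)}"

definition confluent :: "(nat \<Rightarrow> 'v) \<Rightarrow> (nat \<Rightarrow> 'v) \<Rightarrow> 'v" where
  "confluent \<xi> \<eta> = \<xi> (GREATEST n. \<xi> n = \<eta> n)"

definition ultrametric_element :: "('v \<Rightarrow> 'v) \<Rightarrow> 'v \<Rightarrow> ('v \<Rightarrow> real) \<Rightarrow> bool" where
  "ultrametric_element par rt \<phi> \<longleftrightarrow>
     (\<forall>x. \<phi> x > 0) \<and> (\<forall>x. x \<noteq> rt \<longrightarrow> \<phi> (par x) > \<phi> x) \<and>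
     (\<forall>xs. geodesic_ray par rt xs \<longrightarrow> ((\<lambda>n. \<phi> (xs n)) \<longlongrightarrow> 0) sequentially)"

definition ultra_dist :: "('v \<Rightarrow> real) \<Rightarrow> (nat \<Rightarrow> 'v) \<Rightarrow> (nat \<Rightarrow> 'v) \<Rightarrow> real" where
  "ultra_dist \<phi> \<xi> \<eta> = (if \<xi> = \<eta> then 0 else \<phi> (confluent \<xi> \<eta>))"

definition ultra_ball ::
  "('v \<Rightarrow> 'v) \<Rightarrow> 'v \<Rightarrow> ('v \<Rightarrow> real) \<Rightarrow> (nat \<Rightarrow> 'v) \<Rightarrow> real \<Rightarrow> (nat \<Rightarrow> 'v) set" where
  "ultra_ball par rt \<phi> \<xi> r = {\<eta> \<in> boundary par rt. ultra_dist \<phi> \<xi> \<eta> \<le> r}"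

text \<open>Topology of \<partial>T: generated by the boundary sets \<partial>T_x = {\<xi>. x \<in> \<pi>(o,\<xi>)}.\<close>
definition boundary_open :: "('v \<Rightarrow> 'v) \<Rightarrow> 'v \<Rightarrow> (nat \<Rightarrow> 'v) set \<Rightarrow> bool" where
  "boundary_open par rt U \<longleftrightarrow> U \<subseteq> boundary par rt \<and>
     (\<forall>\<xi>\<in>U. \<exists>n. {\<eta> \<in> boundary par rt. \<eta> n = \<xi> n} \<subseteq> U)"

definition boundary_borel_measure :: "('v \<Rightarrow> 'v) \<Rightarrow> 'v \<Rightarrow> (nat \<Rightarrow> 'v) measure \<Rightarrow> bool" where
  "boundary_borel_measure par rt \<mu> \<longleftrightarrow>
     space \<mu> = boundary par rt \<and>
     sets \<mu> = sigma_sets (boundary par rt) {U. boundary_open par rt U}"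

definition support :: "('v \<Rightarrow> 'v) \<Rightarrow> 'v \<Rightarrow> (nat \<Rightarrow> 'v) measure \<Rightarrow> (nat \<Rightarrow> 'v) set" where
  "support par rt \<mu> = {\<xi> \<in> boundary par rt.
     \<forall>U. boundary_open par rt U \<and> \<xi> \<in> U \<longrightarrow> emeasure \<mu> U > 0}"

text \<open>Probability measures on [0,\<infinity>), as Borel measures on the reals null on (-\<infinity>,0).\<close>
definition prob_on_nonneg :: "real measure \<Rightarrow> bool" where
  "prob_on_nonneg \<sigma> \<longleftrightarrow> sets \<sigma> = sets borel \<and> prob_space \<sigma> \<and> emeasure \<sigma> {..<0} = 0"

definition distr_fun :: "real measure \<Rightarrow> real \<Rightarrow> real" where
  "distr_fun \<sigma> r = measure \<sigma> {0..<r}"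

definition F_star :: "real \<Rightarrow> real" where
  "F_star r = (if r > 0 then exp (- 1 / r) else 0)"

text \<open>\<nu> is the probability measure on [0,\<infinity>) with distribution function F(r)^t
  (i.e. \<nu> = \<sigma>^t when F = F_\<sigma>).\<close>
definition is_power_measure :: "real measure \<Rightarrow> (real \<Rightarrow> real) \<Rightarrow> real \<Rightarrow> bool" where
  "is_power_measure \<nu> F t \<longleftrightarrow> prob_on_nonneg \<nu> \<and> (\<forall>r>0. distr_fun \<nu> r = F r powr t)"

definition P_r ::
  "('v \<Rightarrow> 'v) \<Rightarrow> 'v \<Rightarrow> (nat \<Rightarrow> 'v) measure \<Rightarrow> ('v \<Rightarrow> real) \<Rightarrow> real
     \<Rightarrow> ((nat \<Rightarrow> 'v) \<Rightarrow> real) \<Rightarrow> (nat \<Rightarrow> 'v) \<Rightarrow> real" where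
  "P_r par rt \<mu> \<phi> r f \<xi> =
     set_lebesgue_integral \<mu> (ultra_ball par rt \<phi> \<xi> r) f / measure \<mu> (ultra_ball par rt \<phi> \<xi> r)"

definition P_t ::
  "('v \<Rightarrow> 'v) \<Rightarrow> 'v \<Rightarrow> (nat \<Rightarrow> 'v) measure \<Rightarrow> ('v \<Rightarrow> real) \<Rightarrow> real measure
     \<Rightarrow> ((nat \<Rightarrow> 'v) \<Rightarrow> real) \<Rightarrow> (nat \<Rightarrow> 'v) \<Rightarrow> real" where
  "P_t par rt \<mu> \<phi> \<nu> f \<xi> = integral\<^sup>L \<nu> (\<lambda>r. P_r par rt \<mu> \<phi> r f \<xi>)"

definition L2 :: "'a measure \<Rightarrow> ('a \<Rightarrow> real) set" where
  "L2 \<mu> = {f. f \<in> borel_measurable \<mu> \<and> integrable \<mu> (\<lambda>x. (f x)\<^sup>2)}"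

end

theory Submission
  imports Defs
begin

text \<open>Along the ray of \<xi> the closed ball of radius r > 0 is the cylinder of rays sharing the vertex
  \<xi> k, where k is the first index with \<phi>(\<xi> k) \<le> r. Hence P^t f(\<xi>) is the average of the cylinder
  means against the law of this index under \<sigma>^t, and that law is determined by the numbers
  F_\<sigma>(\<phi>(\<xi> n))^t. Putting \<phi>_* = -1/ln(F_\<sigma> \<circ> \<phi>) gives F_*(\<phi>_*) = F_\<sigma>(\<phi>), so both triples
  induce the same law, while the hypotheses on F_\<sigma> make \<phi>_* an ultrametric element.\<close>

definition boundary_cylinder :: "('v \<Rightarrow> 'v) \<Rightarrow> 'v \<Rightarrow> (nat \<Rightarrow> 'v) \<Rightarrow> nat \<Rightarrow> (nat \<Rightarrow> 'v) set" where
  "boundary_cylinder par rt \<xi> n = {\<eta> \<in> boundary par rt. \<eta> n = \<xi> n}"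

text \<open>For r \<le> 0 the value 0 is a dummy: such balls are not cylinders.\<close>
definition ball_level :: "('v \<Rightarrow> real) \<Rightarrow> (nat \<Rightarrow> 'v) \<Rightarrow> real \<Rightarrow> nat" where
  "ball_level \<psi> \<xi> r = (if r > 0 then (LEAST k. \<psi> (\<xi> k) \<le> r) else 0)"

definition cylinder_mean ::
  "('v \<Rightarrow> 'v) \<Rightarrow> 'v \<Rightarrow> (nat \<Rightarrow> 'v) measure \<Rightarrow> ((nat \<Rightarrow> 'v) \<Rightarrow> real) \<Rightarrow> (nat \<Rightarrow> 'v) \<Rightarrow> nat \<Rightarrow> real" where
  "cylinder_mean par rt \<mu> f \<xi> n =
     set_lebesgue_integral \<mu> (boundary_cylinder par rt \<xi> n) f / measure \<mu> (boundary_cylinder par rt \<xi> n)"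

subsection \<open>Rays of the boundary\<close>

lemma ultrametric_element_pos:
  "ultrametric_element par rt \<psi> \<Longrightarrow> \<psi> x > 0"
  unfolding ultrametric_element_def by auto

lemma ray_Suc_less:
  assumes "ultrametric_element par rt \<psi>" "\<xi> \<in> boundary par rt"
  shows "\<psi> (\<xi> (Suc k)) < \<psi> (\<xi> k)"
proof -
  have "\<xi> (Suc k) \<noteq> rt" "par (\<xi> (Suc k)) = \<xi> k" using assms(2) unfolding boundary_def by auto
  then show ?thesis using assms(1) unfolding ultrametric_element_def by metis
qed

lemma ray_strict_antimono:
  assumes "ultrametric_element par rt \<psi>" "\<xi> \<in> boundary par rt"
  shows "strict_mono (\<lambda>k. - \<psi> (\<xi> k))"
  by (rule strict_mono_Suc_iff[THEN iffD2]) (use ray_Suc_less[OF assms] in auto)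

lemma ray_less_iff:
  assumes "ultrametric_element par rt \<psi>" "\<xi> \<in> boundary par rt"
  shows "\<psi> (\<xi> k) < \<psi> (\<xi> j) \<longleftrightarrow> j < k"
  using strict_mono_less[OF ray_strict_antimono[OF assms], of j k] by simp

lemma ray_le_iff:
  assumes "ultrametric_element par rt \<psi>" "\<xi> \<in> boundary par rt"
  shows "\<psi> (\<xi> k) \<le> \<psi> (\<xi> j) \<longleftrightarrow> j \<le> k"
  using strict_mono_less_eq[OF ray_strict_antimono[OF assms], of j k] by simp

lemma boundary_geodesic_ray:
  assumes "ultrametric_element par rt \<psi>" "\<xi> \<in> boundary par rt"
  shows "geodesic_ray par rt \<xi>"
proof -
  have "\<xi> (Suc (Suc n)) \<noteq> \<xi> n" for n
    using ray_less_iff[OF assms, of "Suc (Suc n)" n] by auto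
  moreover have "adjacent par rt (\<xi> n) (\<xi> (Suc n))" for n
    using assms(2) unfolding boundary_def adjacent_def by auto
  ultimately show ?thesis unfolding geodesic_ray_def by auto
qed

lemma ray_tendsto_0:
  assumes "ultrametric_element par rt \<psi>" "\<xi> \<in> boundary par rt"
  shows "((\<lambda>n. \<psi> (\<xi> n)) \<longlongrightarrow> 0) sequentially"
  using assms(1) boundary_geodesic_ray[OF assms] unfolding ultrametric_element_def by blast

lemma boundary_agree_below:
  assumes "\<xi> \<in> boundary par rt" "\<eta> \<in> boundary par rt" "\<xi> k = \<eta> k" "j \<le> k"
  shows "\<xi> j = \<eta> j"
proof -
  have "\<xi> (k - i) = \<eta> (k - i)" for i
  proof (induction i)
    case 0 then show ?case using assms(3) by simp
  next
    case (Suc i)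
    show ?case
    proof (cases "k - i = 0")
      case True then show ?thesis using Suc by simp
    next
      case False
      then have k_i: "k - i = Suc (k - Suc i)" by arith
      have "\<xi> (k - Suc i) = par (\<xi> (k - i))" "\<eta> (k - Suc i) = par (\<eta> (k - i))"
        using assms(1,2) unfolding boundary_def k_i by auto
      then show ?thesis using Suc by simp
    qed
  qed
  from this[of "k - j"] assms(4) show ?thesis by simp
qed

text \<open>The ray runs through the ancestors of x and continues below x by chosen children.\<close>
lemma boundary_ray_through:
  assumes tree: "rooted_tree par rt" and children: "\<And>y. children par rt y \<noteq> {}"
  shows "\<exists>\<xi>\<in>boundary par rt. \<exists>k. \<xi> k = x"
proof -
  define n where "n = (LEAST n. (par ^^ n) x = rt)"
  have n: "(par ^^ n) x = rt"
    unfolding n_def by (rule LeastI_ex) (use tree in \<open>auto simp: rooted_tree_def\<close>)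
  have below_n: "m < n \<Longrightarrow> (par ^^ m) x \<noteq> rt" for m unfolding n_def by (rule not_less_Least)
  define down where "down y = (SOME c. c \<in> children par rt y)" for y
  have down: "down y \<noteq> rt \<and> par (down y) = y" for y
  proof -
    have "down y \<in> children par rt y" unfolding down_def by (rule someI_ex) (use children in auto)
    then show ?thesis by (simp add: children_def)
  qed
  define \<xi> where "\<xi> j = (if j \<le> n then (par ^^ (n - j)) x else (down ^^ (j - n)) x)" for j
  have "\<xi> (Suc j) \<noteq> rt \<and> par (\<xi> (Suc j)) = \<xi> j" for j
  proof (cases "Suc j \<le> n")
    case True
    have "(par ^^ (n - j)) x = par ((par ^^ (n - Suc j)) x)"
      using True by (metis Suc_diff_Suc Suc_le_lessD comp_apply funpow.simps(2))
    then show ?thesis using True below_n[of "n - Suc j"] by (simp add: \<xi>_def)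
  next
    case False
    have "\<xi> j = (down ^^ (j - n)) x" using False by (simp add: \<xi>_def)
    moreover have "\<xi> (Suc j) = down ((down ^^ (j - n)) x)" using False by (simp add: \<xi>_def Suc_diff_le)
    ultimately show ?thesis using down by simp
  qed
  moreover have "\<xi> 0 = rt" using n by (simp add: \<xi>_def)
  ultimately have "\<xi> \<in> boundary par rt" unfolding boundary_def by auto
  moreover have "\<xi> n = x" by (simp add: \<xi>_def)
  ultimately show ?thesis by blast
qed

subsection \<open>Balls are cylinders\<close>

lemma ball_level_le_iff:
  assumes "ultrametric_element par rt \<psi>" "\<xi> \<in> boundary par rt" "r > 0"
  shows "ball_level \<psi> \<xi> r \<le> k \<longleftrightarrow> \<psi> (\<xi> k) \<le> r"
proof -
  have "eventually (\<lambda>n. \<psi> (\<xi> n) < r) sequentially"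
    using order_tendstoD(2)[OF ray_tendsto_0[OF assms(1,2)] assms(3)] .
  then obtain N where "\<psi> (\<xi> N) < r" by (auto simp: eventually_sequentially)
  then have ex: "\<exists>k. \<psi> (\<xi> k) \<le> r" by (intro exI[of _ N]) simp
  have level: "ball_level \<psi> \<xi> r = (LEAST k. \<psi> (\<xi> k) \<le> r)" using assms(3) by (simp add: ball_level_def)
  show ?thesis
  proof
    assume "ball_level \<psi> \<xi> r \<le> k"
    moreover have "\<psi> (\<xi> (ball_level \<psi> \<xi> r)) \<le> r" unfolding level by (rule LeastI_ex[OF ex])
    ultimately show "\<psi> (\<xi> k) \<le> r"
      using ray_le_iff[OF assms(1,2), of k "ball_level \<psi> \<xi> r"] by linarith
  next
    assume "\<psi> (\<xi> k) \<le> r" then show "ball_level \<psi> \<xi> r \<le> k" unfolding level by (rule Least_le)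
  qed
qed

lemma ball_level_eq_0_iff:
  assumes "ultrametric_element par rt \<psi>" "\<xi> \<in> boundary par rt"
  shows "ball_level \<psi> \<xi> r = 0 \<longleftrightarrow> r \<le> 0 \<or> \<psi> (\<xi> 0) \<le> r"
proof (cases "r > 0")
  case True then show ?thesis using ball_level_le_iff[OF assms True, of 0] by auto
next
  case False then show ?thesis by (simp add: ball_level_def)
qed

lemma ball_level_eq_Suc_iff:
  assumes "ultrametric_element par rt \<psi>" "\<xi> \<in> boundary par rt"
  shows "ball_level \<psi> \<xi> r = Suc n \<longleftrightarrow> \<psi> (\<xi> (Suc n)) \<le> r \<and> r < \<psi> (\<xi> n)"
proof (cases "r > 0")
  case True
  have "ball_level \<psi> \<xi> r = Suc n \<longleftrightarrow> ball_level \<psi> \<xi> r \<le> Suc n \<and> \<not> ball_level \<psi> \<xi> r \<le> n" by auto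
  then show ?thesis
    using ball_level_le_iff[OF assms True, of n] ball_level_le_iff[OF assms True, of "Suc n"] by auto
next
  case False
  have "\<psi> (\<xi> (Suc n)) > 0" by (rule ultrametric_element_pos[OF assms(1)])
  then show ?thesis using False by (simp add: ball_level_def)
qed

lemma ultra_ball_eq_cylinder:
  assumes "ultrametric_element par rt \<psi>" "\<xi> \<in> boundary par rt" "r > 0"
  shows "ultra_ball par rt \<psi> \<xi> r = boundary_cylinder par rt \<xi> (ball_level \<psi> \<xi> r)"
proof -
  have "ultra_dist \<psi> \<xi> \<eta> \<le> r \<longleftrightarrow> \<eta> (ball_level \<psi> \<xi> r) = \<xi> (ball_level \<psi> \<xi> r)"
    if \<eta>: "\<eta> \<in> boundary par rt" for \<eta>
  proof (cases "\<eta> = \<xi>")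
    case True then show ?thesis using assms(3) by (simp add: ultra_dist_def)
  next
    case False
    then obtain k0 where k0: "\<xi> k0 \<noteq> \<eta> k0" by (metis ext)
    define agree where "agree k = (\<xi> k = \<eta> k)" for k
    have bounded: "agree k \<Longrightarrow> k \<le> k0" for k
      using boundary_agree_below[OF assms(2) \<eta>, of k k0] k0 unfolding agree_def by force
    have "agree 0" using assms(2) \<eta> unfolding agree_def boundary_def by auto
    define K where "K = (GREATEST k. agree k)"
    have "agree K" unfolding K_def by (rule GreatestI_nat[where P=agree, OF \<open>agree 0\<close> bounded])
    have agree_iff: "agree k \<longleftrightarrow> k \<le> K" for k
    proof
      assume "agree k" then show "k \<le> K" unfolding K_def by (rule Greatest_le_nat) (use bounded in blast)
    next
      assume "k \<le> K" then show "agree k"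
        using boundary_agree_below[OF assms(2) \<eta>, of K k] \<open>agree K\<close> unfolding agree_def by blast
    qed
    have "ultra_dist \<psi> \<xi> \<eta> = \<psi> (\<xi> K)"
      using False unfolding ultra_dist_def confluent_def K_def agree_def by auto
    then have "ultra_dist \<psi> \<xi> \<eta> \<le> r \<longleftrightarrow> ball_level \<psi> \<xi> r \<le> K"
      using ball_level_le_iff[OF assms] by simp
    also have "\<dots> \<longleftrightarrow> agree (ball_level \<psi> \<xi> r)" using agree_iff by simp
    finally show ?thesis unfolding agree_def by auto
  qed
  then show ?thesis unfolding ultra_ball_def boundary_cylinder_def by auto
qed

lemma ball_level_measurable:
  assumes "ultrametric_element par rt \<psi>" "\<xi> \<in> boundary par rt"
  shows "ball_level \<psi> \<xi> \<in> borel \<rightarrow>\<^sub>M count_space UNIV"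
  unfolding measurable_count_space_eq2_countable
proof (intro conjI ballI)
  fix a :: nat
  show "ball_level \<psi> \<xi> -` {a} \<inter> space borel \<in> sets borel"
  proof (cases a)
    case 0
    then have "ball_level \<psi> \<xi> -` {a} \<inter> space borel = {..0} \<union> {\<psi> (\<xi> 0)..}"
      using ball_level_eq_0_iff[OF assms] by auto
    then show ?thesis by simp
  next
    case (Suc n)
    then have "ball_level \<psi> \<xi> -` {a} \<inter> space borel = {\<psi> (\<xi> (Suc n))..<\<psi> (\<xi> n)}"
      using ball_level_eq_Suc_iff[OF assms] by auto
    then show ?thesis by simp
  qed
qed simp

subsection \<open>The semigroup along a ray\<close>

lemma power_measure_no_atom_at_0:
  assumes power: "is_power_measure \<rho> F t" and "t > 0" and F_0: "(F \<longlongrightarrow> 0) (at_right 0)"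
    and F_nonneg: "\<And>r. 0 \<le> F r"
  shows "emeasure \<rho> {0} = 0"
proof -
  have sets: "sets \<rho> = sets borel" and "prob_space \<rho>" and distr: "\<forall>r>0. distr_fun \<rho> r = F r powr t"
    using power unfolding is_power_measure_def prob_on_nonneg_def by auto
  interpret prob_space \<rho> by fact
  have lim: "((\<lambda>r. F r powr t) \<longlongrightarrow> 0) (at_right 0)"
    by (rule tendsto_zero_powrI[OF F_0 tendsto_const]) (use F_nonneg \<open>t > 0\<close> in auto)
  have "eventually (\<lambda>r. measure \<rho> {0} \<le> F r powr t) (at_right (0::real))"
    using eventually_at_right_less[of "0::real"]
  proof (rule eventually_mono)
    fix r :: real assume "0 < r"
    then have "measure \<rho> {0} \<le> measure \<rho> {0..<r}"
      by (intro finite_measure_mono) (use sets in auto)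
    also have "\<dots> = F r powr t" using distr \<open>0 < r\<close> by (simp add: distr_fun_def)
    finally show "measure \<rho> {0} \<le> F r powr t" .
  qed
  then have "measure \<rho> {0} \<le> 0" by (rule tendsto_lowerbound[OF lim]) simp
  then show ?thesis using measure_nonneg[of \<rho> "{0}"] emeasure_eq_measure[of "{0}"] by simp
qed

lemma emeasure_distr_ball_level:
  assumes \<rho>: "prob_on_nonneg \<rho>" and no_atom: "emeasure \<rho> {0} = 0"
    and \<psi>: "ultrametric_element par rt \<psi>" and \<xi>: "\<xi> \<in> boundary par rt"
  shows "emeasure (distr \<rho> (count_space UNIV) (ball_level \<psi> \<xi>)) {0}
           = ennreal (1 - distr_fun \<rho> (\<psi> (\<xi> 0)))"
    and "emeasure (distr \<rho> (count_space UNIV) (ball_level \<psi> \<xi>)) {Suc n}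
           = ennreal (distr_fun \<rho> (\<psi> (\<xi> n)) - distr_fun \<rho> (\<psi> (\<xi> (Suc n))))"
proof -
  have sets: "sets \<rho> = sets borel" and "prob_space \<rho>"
    using \<rho> unfolding prob_on_nonneg_def by auto
  interpret prob_space \<rho> by fact
  have space: "space \<rho> = UNIV" using sets_eq_imp_space_eq[OF sets] by simp
  have meas: "ball_level \<psi> \<xi> \<in> \<rho> \<rightarrow>\<^sub>M count_space UNIV"
    using ball_level_measurable[OF \<psi> \<xi>] by (simp add: measurable_cong_sets[OF sets refl])
  have pos: "\<And>x. \<psi> x > 0" using ultrametric_element_pos[OF \<psi>] .
  have interval: "measure \<rho> {a..<b} = distr_fun \<rho> b - distr_fun \<rho> a" if "0 \<le> a" "a \<le> b" for a b
  proof -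
    have "{a..<b} = {0..<b} - {0..<a}" using that by auto
    then have "measure \<rho> {a..<b} = measure \<rho> ({0..<b} - {0..<a})" by simp
    also have "\<dots> = measure \<rho> {0..<b} - measure \<rho> {0..<a}"
      by (rule finite_measure_Diff) (use sets that in auto)
    finally show ?thesis by (simp add: distr_fun_def)
  qed
  have "ball_level \<psi> \<xi> -` {0} \<inter> space \<rho> = space \<rho> - ({0..<\<psi> (\<xi> 0)} - {0})"
    using ball_level_eq_0_iff[OF \<psi> \<xi>] space by auto
  moreover have "measure \<rho> ({0..<\<psi> (\<xi> 0)} - {0}) = distr_fun \<rho> (\<psi> (\<xi> 0))"
    using finite_measure_Diff[of "{0..<\<psi> (\<xi> 0)}" "{0}"] no_atom pos[of "\<xi> 0"] sets
    by (simp add: distr_fun_def measure_def)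
  ultimately have "measure \<rho> (ball_level \<psi> \<xi> -` {0} \<inter> space \<rho>) = 1 - distr_fun \<rho> (\<psi> (\<xi> 0))"
    using prob_compl[of "{0..<\<psi> (\<xi> 0)} - {0}"] sets by simp
  then show "emeasure (distr \<rho> (count_space UNIV) (ball_level \<psi> \<xi>)) {0}
      = ennreal (1 - distr_fun \<rho> (\<psi> (\<xi> 0)))"
    by (simp add: emeasure_distr[OF meas] emeasure_eq_measure)
  have "ball_level \<psi> \<xi> -` {Suc n} \<inter> space \<rho> = {\<psi> (\<xi> (Suc n))..<\<psi> (\<xi> n)}"
    using ball_level_eq_Suc_iff[OF \<psi> \<xi>] space by auto
  moreover have "\<psi> (\<xi> (Suc n)) \<le> \<psi> (\<xi> n)" using ray_Suc_less[OF \<psi> \<xi>, of n] by simp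
  ultimately have "measure \<rho> (ball_level \<psi> \<xi> -` {Suc n} \<inter> space \<rho>)
      = distr_fun \<rho> (\<psi> (\<xi> n)) - distr_fun \<rho> (\<psi> (\<xi> (Suc n)))"
    using interval pos[of "\<xi> (Suc n)"] by simp
  then show "emeasure (distr \<rho> (count_space UNIV) (ball_level \<psi> \<xi>)) {Suc n}
      = ennreal (distr_fun \<rho> (\<psi> (\<xi> n)) - distr_fun \<rho> (\<psi> (\<xi> (Suc n))))"
    by (simp add: emeasure_distr[OF meas] emeasure_eq_measure)
qed

lemma P_r_eq_cylinder_mean:
  assumes "ultrametric_element par rt \<psi>" "\<xi> \<in> boundary par rt" "r > 0"
  shows "P_r par rt \<mu> \<psi> r f \<xi> = cylinder_mean par rt \<mu> f \<xi> (ball_level \<psi> \<xi> r)"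
  using ultra_ball_eq_cylinder[OF assms] by (simp add: P_r_def cylinder_mean_def)

lemma ultra_ball_neg_radius:
  assumes "ultrametric_element par rt \<psi>" "r < 0"
  shows "ultra_ball par rt \<psi> \<xi> r = {}"
proof -
  have "\<not> \<psi> x \<le> r" for x using assms ultrametric_element_pos[OF assms(1), of x] by simp
  then show ?thesis using assms(2) by (auto simp: ultra_ball_def ultra_dist_def)
qed

lemma P_r_borel_measurable:
  assumes \<psi>: "ultrametric_element par rt \<psi>" and \<xi>: "\<xi> \<in> boundary par rt"
  shows "(\<lambda>r. P_r par rt \<mu> \<psi> r f \<xi>) \<in> borel_measurable borel"
proof -
  have "(\<lambda>r. P_r par rt \<mu> \<psi> r f \<xi>) = (\<lambda>r. if 0 < r then cylinder_mean par rt \<mu> f \<xi> (ball_level \<psi> \<xi> r)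
                                       else if r = 0 then P_r par rt \<mu> \<psi> 0 f \<xi> else 0)"
    using P_r_eq_cylinder_mean[OF \<psi> \<xi>] ultra_ball_neg_radius[OF \<psi>]
    by (auto simp: P_r_def fun_eq_iff)
  also have "\<dots> \<in> borel_measurable borel"
    by (intro measurable_If measurable_const measurable_compose[OF ball_level_measurable[OF \<psi> \<xi>]]
        borel_measurable_count_space) auto
  finally show ?thesis .
qed

lemma P_t_eq_integral_cylinder_mean:
  assumes \<rho>: "prob_on_nonneg \<rho>" and no_atom: "emeasure \<rho> {0} = 0"
    and \<psi>: "ultrametric_element par rt \<psi>" and \<xi>: "\<xi> \<in> boundary par rt"
  shows "P_t par rt \<mu> \<psi> \<rho> f \<xi>
    = integral\<^sup>L (distr \<rho> (count_space UNIV) (ball_level \<psi> \<xi>)) (cylinder_mean par rt \<mu> f \<xi>)"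
proof -
  have sets: "sets \<rho> = sets borel" and "emeasure \<rho> {..<0} = 0"
    using \<rho> unfolding prob_on_nonneg_def by auto
  have level_meas: "ball_level \<psi> \<xi> \<in> \<rho> \<rightarrow>\<^sub>M count_space UNIV"
    using ball_level_measurable[OF \<psi> \<xi>] by (simp add: measurable_cong_sets[OF sets refl])
  text \<open>P_r is only determined by the cylinders for r > 0, so \<rho> must not charge (-\<infinity>, 0].\<close>
  have "emeasure \<rho> {..0} = emeasure \<rho> ({..<0} \<union> {0})"
    by (rule arg_cong[where f="emeasure \<rho>"]) auto
  also have "\<dots> = 0"
    using plus_emeasure[of "{..<0}" \<rho> "{0}"] sets no_atom \<open>emeasure \<rho> {..<0} = 0\<close> by simp
  finally have "{..0} \<in> null_sets \<rho>" using sets by (simp add: null_sets_def)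
  then have AE_pos: "AE r in \<rho>. 0 < r" by (rule AE_I') auto
  have "P_t par rt \<mu> \<psi> \<rho> f \<xi> = integral\<^sup>L \<rho> (\<lambda>r. cylinder_mean par rt \<mu> f \<xi> (ball_level \<psi> \<xi> r))"
    unfolding P_t_def
  proof (rule integral_cong_AE)
    show "(\<lambda>r. P_r par rt \<mu> \<psi> r f \<xi>) \<in> borel_measurable \<rho>"
      using P_r_borel_measurable[OF \<psi> \<xi>] by (simp add: measurable_cong_sets[OF sets refl])
    show "(\<lambda>r. cylinder_mean par rt \<mu> f \<xi> (ball_level \<psi> \<xi> r)) \<in> borel_measurable \<rho>"
      by (intro measurable_compose[OF level_meas] borel_measurable_count_space)
    show "AE r in \<rho>. P_r par rt \<mu> \<psi> r f \<xi> = cylinder_mean par rt \<mu> f \<xi> (ball_level \<psi> \<xi> r)"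
      using AE_pos by eventually_elim (rule P_r_eq_cylinder_mean[OF \<psi> \<xi>])
  qed
  also have "\<dots> = integral\<^sup>L (distr \<rho> (count_space UNIV) (ball_level \<psi> \<xi>)) (cylinder_mean par rt \<mu> f \<xi>)"
    by (rule integral_distr[symmetric, OF level_meas borel_measurable_count_space])
  finally show ?thesis .
qed

lemma P_t_eq_if_distr_fun_eq_on_ray:
  assumes \<rho>: "prob_on_nonneg \<rho>" "emeasure \<rho> {0} = 0" and \<psi>: "ultrametric_element par rt \<psi>"
    and \<rho>': "prob_on_nonneg \<rho>'" "emeasure \<rho>' {0} = 0" and \<psi>': "ultrametric_element par rt \<psi>'"
    and \<xi>: "\<xi> \<in> boundary par rt"
    and distr_eq: "\<And>n. distr_fun \<rho> (\<psi> (\<xi> n)) = distr_fun \<rho>' (\<psi>' (\<xi> n))"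
  shows "P_t par rt \<mu> \<psi> \<rho> f \<xi> = P_t par rt \<mu> \<psi>' \<rho>' f \<xi>"
proof -
  have "distr \<rho> (count_space UNIV) (ball_level \<psi> \<xi>) = distr \<rho>' (count_space UNIV) (ball_level \<psi>' \<xi>)"
  proof (rule measure_eqI_countable[where A=UNIV])
    fix a :: nat
    show "emeasure (distr \<rho> (count_space UNIV) (ball_level \<psi> \<xi>)) {a}
        = emeasure (distr \<rho>' (count_space UNIV) (ball_level \<psi>' \<xi>)) {a}"
      by (cases a) (simp_all add: emeasure_distr_ball_level[OF \<rho> \<psi> \<xi>]
          emeasure_distr_ball_level[OF \<rho>' \<psi>' \<xi>] distr_eq)
  qed auto
  then show ?thesis
    using P_t_eq_integral_cylinder_mean[OF \<rho> \<psi> \<xi>] P_t_eq_integral_cylinder_mean[OF \<rho>' \<psi>' \<xi>] by simp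
qed

subsection \<open>The reparametrised ultrametric element\<close>

lemma F_star_neg_inverse_ln:
  assumes "0 < y" "y < 1"
  shows "F_star (- 1 / ln y) = y"
proof -
  have "ln y < 0" using assms by simp
  then show ?thesis using assms by (simp add: F_star_def divide_simps)
qed

lemma F_star_tendsto_0: "(F_star \<longlongrightarrow> 0) (at_right 0)"
proof -
  have "filterlim (\<lambda>r::real. - inverse r) at_bot (at_right 0)"
    by (rule filterlim_uminus_at_top[THEN iffD1, OF filterlim_inverse_at_top_right])
  then have "((\<lambda>r::real. exp (- inverse r)) \<longlongrightarrow> 0) (at_right 0)"
    by (rule filterlim_compose[OF exp_at_bot])
  moreover have "eventually (\<lambda>r. exp (- inverse r) = F_star r) (at_right (0::real))"
    using eventually_at_right_less[of "0::real"] by eventually_elim (simp add: F_star_def divide_inverse)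
  ultimately show ?thesis by (rule Lim_transform_eventually)
qed

lemma neg_inverse_ln_tendsto_0: "((\<lambda>y::real. - 1 / ln y) \<longlongrightarrow> 0) (at_right 0)"
proof -
  have "filterlim (\<lambda>y::real. - ln y) at_top (at_right 0)"
    by (rule filterlim_uminus_at_bot[THEN iffD1, OF ln_at_0])
  then have "((\<lambda>y::real. inverse (- ln y)) \<longlongrightarrow> 0) (at_right 0)"
    by (rule tendsto_inverse_0_at_top)
  then show ?thesis by (simp add: divide_inverse)
qed

lemma distr_fun_bounds_on_tree:
  fixes F :: "real \<Rightarrow> real"
  assumes tree: "rooted_tree par rt" and children: "\<And>y. children par rt y \<noteq> {}"
    and \<phi>: "ultrametric_element par rt \<phi>" and F_nonneg: "\<And>r. 0 \<le> F r" and F_root: "F (\<phi> rt) < 1"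
    and F_mono: "\<And>\<xi>. \<xi> \<in> boundary par rt \<Longrightarrow> strict_mono_on (\<phi> ` range \<xi>) F"
  shows "0 < F (\<phi> x)" and "F (\<phi> x) < 1" and "x \<noteq> rt \<Longrightarrow> F (\<phi> x) < F (\<phi> (par x))"
proof -
  obtain \<xi> k where \<xi>: "\<xi> \<in> boundary par rt" and x: "\<xi> k = x"
    using boundary_ray_through[OF tree children] by blast
  have step: "F (\<phi> (\<xi> (Suc j))) < F (\<phi> (\<xi> j))" for j
    by (rule strict_mono_onD[OF F_mono[OF \<xi>]]) (use ray_Suc_less[OF \<phi> \<xi>] in auto)
  then have "F (\<phi> (\<xi> j)) \<le> F (\<phi> (\<xi> 0))" for j
    by (induction j) (auto intro: order.trans[OF less_imp_le])
  moreover have root: "\<xi> 0 = rt" using \<xi> unfolding boundary_def by auto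
  ultimately show "F (\<phi> x) < 1" using F_root x by (metis le_less_trans)
  show "0 < F (\<phi> x)" using step[of k] F_nonneg[of "\<phi> (\<xi> (Suc k))"] unfolding x by linarith
  assume "x \<noteq> rt"
  then obtain j where "k = Suc j" using root x by (cases k) auto
  moreover have "par (\<xi> (Suc j)) = \<xi> j" using \<xi> unfolding boundary_def by auto
  ultimately show "F (\<phi> x) < F (\<phi> (par x))" using step[of j] x by simp
qed

lemma ultrametric_element_neg_inverse_ln:
  fixes F :: "real \<Rightarrow> real"
  assumes \<phi>: "ultrametric_element par rt \<phi>" and F_0: "(F \<longlongrightarrow> 0) (at_right 0)"
    and F_pos: "\<And>x. 0 < F (\<phi> x)" and F_less_1: "\<And>x. F (\<phi> x) < 1"
    and F_mono: "\<And>x. x \<noteq> rt \<Longrightarrow> F (\<phi> x) < F (\<phi> (par x))"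
  shows "ultrametric_element par rt (\<lambda>x. - 1 / ln (F (\<phi> x)))"
  unfolding ultrametric_element_def
proof (intro conjI allI impI)
  fix x
  have "ln (F (\<phi> x)) < 0" using F_pos F_less_1 by simp
  then show "0 < - 1 / ln (F (\<phi> x))" by (simp add: divide_simps)
next
  fix x :: 'a assume "x \<noteq> rt"
  then have "ln (F (\<phi> x)) < ln (F (\<phi> (par x)))" "ln (F (\<phi> (par x))) < 0"
    using F_mono F_pos F_less_1 by auto
  then show "- 1 / ln (F (\<phi> x)) < - 1 / ln (F (\<phi> (par x)))" by (simp add: divide_simps)
next
  fix xs assume "geodesic_ray par rt xs"
  then have "((\<lambda>n. \<phi> (xs n)) \<longlongrightarrow> 0) sequentially" using \<phi> unfolding ultrametric_element_def by blast
  then have "filterlim (\<lambda>n. \<phi> (xs n)) (at_right 0) sequentially"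
    by (rule tendsto_imp_filterlim_at_right) (use ultrametric_element_pos[OF \<phi>] in auto)
  then have "((\<lambda>n. F (\<phi> (xs n))) \<longlongrightarrow> 0) sequentially" by (rule filterlim_compose[OF F_0])
  then have "filterlim (\<lambda>n. F (\<phi> (xs n))) (at_right 0) sequentially"
    by (rule tendsto_imp_filterlim_at_right) (use F_pos in auto)
  then show "((\<lambda>n. - 1 / ln (F (\<phi> (xs n)))) \<longlongrightarrow> 0) sequentially"
    by (rule filterlim_compose[OF neg_inverse_ln_tendsto_0])
qed

theorem lemma3p2:
  fixes par :: "'v \<Rightarrow> 'v" and rt :: 'v
    and \<phi> :: "'v \<Rightarrow> real" and \<mu> :: "(nat \<Rightarrow> 'v) measure" and \<sigma> :: "real measure"
  assumes tree: "rooted_tree par rt"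
    and loc_fin: "locally_finite_tree par rt"
    and inf: "infinite (UNIV :: 'v set)"
    and deg: "\<And>x. forward_degree par rt x \<ge> 2"
    and phi: "ultrametric_element par rt \<phi>"
    and mu_borel: "boundary_borel_measure par rt \<mu>"
    and mu_prob: "prob_space \<mu>"
    and mu_supp: "support par rt \<mu> = boundary par rt"
    and sigma: "prob_on_nonneg \<sigma>"
    and F0: "(distr_fun \<sigma> \<longlongrightarrow> 0) (at_right 0)"
    and Fo: "distr_fun \<sigma> (\<phi> rt) < 1"
    and Fmono: "\<And>\<xi>. \<xi> \<in> boundary par rt \<Longrightarrow> strict_mono_on (\<phi> ` range \<xi>) (distr_fun \<sigma>)"
  shows "\<exists>\<phi>s. ultrametric_element par rt \<phi>s \<and>
           (\<forall>t>0. \<forall>\<nu> \<nu>s. is_power_measure \<nu> (distr_fun \<sigma>) t \<longrightarrow> is_power_measure \<nu>s F_star t \<longrightarrow>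
              (\<forall>f \<in> L2 \<mu>. \<forall>\<xi> \<in> boundary par rt. P_t par rt \<mu> \<phi> \<nu> f \<xi> = P_t par rt \<mu> \<phi>s \<nu>s f \<xi>))"
proof -
  define F where "F = distr_fun \<sigma>"
  have F_nonneg: "0 \<le> F r" for r unfolding F_def distr_fun_def by simp
  have "children par rt y \<noteq> {}" for y
    using deg[of y] unfolding forward_degree_def by (metis card.empty not_numeral_le_zero)
  note F_bounds = distr_fun_bounds_on_tree[OF tree this phi F_nonneg Fo[folded F_def] Fmono[folded F_def]]
  define \<phi>s where "\<phi>s x = - 1 / ln (F (\<phi> x))" for x
  have \<phi>s: "ultrametric_element par rt \<phi>s"
    unfolding \<phi>s_def by (rule ultrametric_element_neg_inverse_ln[OF phi F0[folded F_def] F_bounds])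
  have "P_t par rt \<mu> \<phi> \<nu> f \<xi> = P_t par rt \<mu> \<phi>s \<nu>s f \<xi>"
    if "t > 0" and \<nu>: "is_power_measure \<nu> F t" and \<nu>s: "is_power_measure \<nu>s F_star t"
      and \<xi>: "\<xi> \<in> boundary par rt" for t \<nu> \<nu>s f \<xi>
  proof (rule P_t_eq_if_distr_fun_eq_on_ray[OF _ _ phi _ _ \<phi>s \<xi>])
    show "prob_on_nonneg \<nu>" "prob_on_nonneg \<nu>s" using \<nu> \<nu>s unfolding is_power_measure_def by auto
    show "emeasure \<nu> {0} = 0"
      by (rule power_measure_no_atom_at_0[OF \<nu> \<open>t > 0\<close> F0[folded F_def] F_nonneg])
    show "emeasure \<nu>s {0} = 0"
      by (rule power_measure_no_atom_at_0[OF \<nu>s \<open>t > 0\<close> F_star_tendsto_0]) (simp add: F_star_def)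
    fix n
    have "F_star (\<phi>s (\<xi> n)) = F (\<phi> (\<xi> n))"
      unfolding \<phi>s_def by (rule F_star_neg_inverse_ln[OF F_bounds(1,2)])
    then show "distr_fun \<nu> (\<phi> (\<xi> n)) = distr_fun \<nu>s (\<phi>s (\<xi> n))"
      using \<nu> \<nu>s ultrametric_element_pos[OF phi] ultrametric_element_pos[OF \<phi>s]
      unfolding is_power_measure_def by simp
  qed
  then show ?thesis using \<phi>s unfolding F_def by blast
qed

end
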